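(* Let $\kappa\geqslant12$ be even, $a(n)$ the Fourier coefficients of a holomorphic cusp form of weight $\kappa$ for $SL_2(\mathbb{Z})$, let $T\geqslant10$ and $y=T^{3/4}$. For positive integers $n,m,k,\ell$ set $g(n,m,k,\ell)=\dfrac{a(n)a(m)a(k)a(\ell)}{(nmk\ell)^{\kappa/2+1/4}}$ if $n,m,k,\ell\leqslant y$ and $g(n,m,k,\ell)=0$ otherwise. Define \[ S_4(x)=\frac18\sum_{n,m,k,\ell\leqslant y} g(n,m,k,\ell)\,x^{2\kappa-1}\cos\big(4\pi(\sqrt n+\sqrt m+\sqrt k+\sqrt\ell)\sqrt x-\pi\big). \] Then for every $\varepsilon>0$, \[ \int_T^{2T}S_4(x)\,\mathrm{d}x\ll T^{2\kappa-1/2+\varepsilon}y^{1/2}= T^{2\kappa-1/8+\varepsilon}, \] with the implied constant depending on $\varepsilon$ and the cusp form.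
   Context: Sums are over positive integers $n,m,k,\ell$. The coefficients $a(n)$ are real and satisfy Deligne's bound $a(n)\ll n^{(\kappa-1)/2}d(n)$, where $d(n)$ is the number of divisors of $n$. *)

theory Defs
  imports "HOL-Analysis.Analysis"
begin

definition qexp :: "(nat \<Rightarrow> real) \<Rightarrow> complex \<Rightarrow> complex" where
  "qexp a z = (\<Sum>n. complex_of_real (a (Suc n)) * exp (2 * pi * \<i> * of_nat (Suc n) * z))"

text \<open>a(n), n >= 1, are the Fourier coefficients of a holomorphic cusp form of weight kappa
  for SL_2(Z): the series converges on the upper half plane (hence defines a holomorphic,
  1-periodic function vanishing at the cusp, as there is no constant term) and the function
  satisfies F(-1/z) = z^kappa F(z).\<close>
definition is_cusp_form_coeffs :: "nat \<Rightarrow> (nat \<Rightarrow> real) \<Rightarrow> bool" where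
  "is_cusp_form_coeffs \<kappa> a \<longleftrightarrow>
     (\<forall>z. Im z > 0 \<longrightarrow>
        summable (\<lambda>n. complex_of_real (a (Suc n)) * exp (2 * pi * \<i> * of_nat (Suc n) * z))) \<and>
     (\<forall>z. Im z > 0 \<longrightarrow> qexp a (- 1 / z) = z ^ \<kappa> * qexp a z)"

definition divisor_count :: "nat \<Rightarrow> nat" where
  "divisor_count n = card {d. d dvd n}"

definition g4 :: "nat \<Rightarrow> (nat \<Rightarrow> real) \<Rightarrow> real \<Rightarrow> nat \<Rightarrow> nat \<Rightarrow> nat \<Rightarrow> nat \<Rightarrow> real" where
  "g4 \<kappa> a y n m k l =
     (if real n \<le> y \<and> real m \<le> y \<and> real k \<le> y \<and> real l \<le> y
      then a n * a m * a k * a l / (real (n * m * k * l)) powr (real \<kappa> / 2 + 1 / 4)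
      else 0)"

definition S4 :: "nat \<Rightarrow> (nat \<Rightarrow> real) \<Rightarrow> real \<Rightarrow> real \<Rightarrow> real" where
  "S4 \<kappa> a T x =
     (let y = T powr (3 / 4) in
      (1 / 8) * (\<Sum>n\<in>{1..nat \<lfloor>y\<rfloor>}. \<Sum>m\<in>{1..nat \<lfloor>y\<rfloor>}. \<Sum>k\<in>{1..nat \<lfloor>y\<rfloor>}. \<Sum>l\<in>{1..nat \<lfloor>y\<rfloor>}.
         g4 \<kappa> a y n m k l * x ^ (2 * \<kappa> - 1) *
         cos (4 * pi * (sqrt (real n) + sqrt (real m) + sqrt (real k) + sqrt (real l)) * sqrt x - pi)))"

end

theory Submission
  imports Defs
begin

text \<open>Integrating term by term, each summand of \<open>S4\<close> is \<open>g4 n m k l\<close> times an oscillatory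
  integral of \<open>x^(2\<kappa>-1) cos (c sqrt x - pi)\<close> over \<open>[T, 2T]\<close> with frequency
  \<open>c = 4 pi (sqrt n + sqrt m + sqrt k + sqrt l) \<ge> 4 pi (n m k l)^(1/8)\<close>; one integration by parts
  bounds it by \<open>T^(2\<kappa>-1/2) / c\<close>. By Deligne's bound the whole sum is then at most \<open>T^(2\<kappa>-1/2)\<close>
  times the fourth power of \<open>\<Sum>n\<le>y. d(n) n^(-7/8)\<close>, a divisor sum of size \<open>O(y^(1/8) log y)\<close>.\<close>

lemma powr_Suc_diff_ge:
  fixes s :: real assumes "0 < s" "s \<le> 1"
  shows "s * real (Suc M) powr (s - 1) \<le> real (Suc M) powr s - real M powr s"
proof (cases "M = 0")
  case True
  then show ?thesis using assms by simp
next
  case False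
  have "\<exists>z. real M < z \<and> z < real (Suc M) \<and>
      real (Suc M) powr s - real M powr s = (real (Suc M) - real M) * (s * z powr (s - 1))"
    using False by (intro MVT2) (auto intro: has_real_derivative_powr)
  then obtain z where z: "real M < z" "z < real (Suc M)"
    and mvt: "real (Suc M) powr s - real M powr s = s * z powr (s - 1)"
    by auto
  have "z powr (s - 1) \<ge> real (Suc M) powr (s - 1)"
    using z assms False by (intro powr_mono2') auto
  then show ?thesis using mvt assms by simp
qed

lemma sum_powr_le:
  fixes s :: real assumes "0 < s" "s \<le> 1"
  shows "(\<Sum>e=1..M. real e powr (s - 1)) \<le> real M powr s / s"
proof (induction M)
  case (Suc M)
  then show ?case
    using powr_Suc_diff_ge[OF assms, of M] assms by (simp add: field_simps del: of_nat_Suc)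
qed simp

lemma harm_le_one_plus_ln: "n > 0 \<Longrightarrow> (harm n :: real) \<le> 1 + ln (real n)"
  using euler_mascheroni_sequence_decreasing[of 1 n] by (simp add: harm_def)

lemma divisor_count_eq_card_divisors_le:
  assumes "1 \<le> n" "n \<le> N"
  shows "divisor_count n = card {d\<in>{1..N}. d dvd n}"
proof -
  have "{d. d dvd n} = {d\<in>{1..N}. d dvd n}"
    using assms by (auto dest: dvd_imp_le intro: Suc_leI)
  then show ?thesis unfolding divisor_count_def by simp
qed

lemma sum_multiples_powr:
  assumes "d \<ge> 1"
  shows "(\<Sum>n\<in>{n\<in>{1..N}. d dvd n}. real n powr r) = real d powr r * (\<Sum>e=1..N div d. real e powr r)"
proof -
  have "{n\<in>{1..N}. d dvd n} = (\<lambda>e. d * e) ` {1..N div d}"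
    using assms by (auto simp: less_eq_div_iff_mult_less_eq mult.commute image_iff Suc_le_eq)
  moreover have "inj_on (\<lambda>e. d * e) {1..N div d}"
    using assms by (auto simp: inj_on_def)
  ultimately show ?thesis
    by (simp add: sum.reindex powr_mult sum_distrib_left)
qed

lemma sum_divisor_count_powr_le:
  fixes s :: real assumes "0 < s" "s \<le> 1"
  shows "(\<Sum>n=1..N. real (divisor_count n) * real n powr (s - 1)) \<le> real N powr s / s * harm N"
proof -
  have "(\<Sum>n=1..N. real (divisor_count n) * real n powr (s - 1))
      = (\<Sum>n=1..N. \<Sum>d\<in>{d\<in>{1..N}. d dvd n}. real n powr (s - 1))"
    using divisor_count_eq_card_divisors_le by (intro sum.cong refl) auto
  also have "\<dots> = (\<Sum>d=1..N. \<Sum>n\<in>{n\<in>{1..N}. d dvd n}. real n powr (s - 1))"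
    by (rule sum.swap_restrict) auto
  also have "\<dots> = (\<Sum>d=1..N. real d powr (s - 1) * (\<Sum>e=1..N div d. real e powr (s - 1)))"
    by (intro sum.cong refl sum_multiples_powr) auto
  also have "\<dots> \<le> (\<Sum>d=1..N. real N powr s / s * inverse (real d))"
  proof (intro sum_mono)
    fix d assume d: "d \<in> {1..N}"
    have "real (N div d) \<le> real N / real d"
      by (rule of_nat_div_le_of_nat)
    then have "real (N div d) powr s \<le> (real N / real d) powr s"
      using assms by (intro powr_mono2) auto
    then have "(\<Sum>e=1..N div d. real e powr (s - 1)) \<le> (real N / real d) powr s / s"
      using sum_powr_le[OF assms, of "N div d"] assms
      by (meson divide_right_mono less_imp_le order.trans)
    then have "real d powr (s - 1) * (\<Sum>e=1..N div d. real e powr (s - 1))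
        \<le> real d powr (s - 1) * ((real N / real d) powr s / s)"
      by (rule mult_left_mono) simp
    also have "\<dots> = real N powr s / s * inverse (real d)"
      using d by (simp add: powr_divide powr_diff field_simps)
    finally show "real d powr (s - 1) * (\<Sum>e=1..N div d. real e powr (s - 1))
        \<le> real N powr s / s * inverse (real d)" .
  qed
  also have "\<dots> = real N powr s / s * harm N"
    by (simp add: harm_def sum_distrib_left)
  finally show ?thesis .
qed

lemma has_real_derivative_power_sqrt_sin:
  fixes c x \<theta> :: real assumes "x > 0" "c > 0"
  shows "((\<lambda>x. 2 / c * (x ^ p * sqrt x) * sin (c * sqrt x + \<theta>)) has_real_derivative
     x ^ p * cos (c * sqrt x + \<theta>) + 2 / c * (real p * x ^ (p - 1) * sqrt x + x ^ p / (2 * sqrt x)) * sin (c * sqrt x + \<theta>)) (at x)"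
  using assms by (auto intro!: derivative_eq_intros simp: field_simps inverse_eq_divide)

lemma abs_amplitude_deriv_sin_le:
  fixes c T x \<theta> :: real assumes "T \<le> x" "x \<le> 2*T" "c > 0" "T > 0"
  shows "\<bar>2 / c * (real p * x ^ (p - 1) * sqrt x + x ^ p / (2 * sqrt x)) * sin (c * sqrt x + \<theta>)\<bar>
    \<le> 2 / c * ((real p + 1) * (2^p * T^p) / sqrt T)"
proof -
  have x: "x > 0" using assms by simp
  have "\<bar>2 / c * (real p * x ^ (p - 1) * sqrt x + x ^ p / (2 * sqrt x)) * sin (c * sqrt x + \<theta>)\<bar>
      = 2 / c * (real p * x ^ (p - 1) * sqrt x + x ^ p / (2 * sqrt x)) * \<bar>sin (c * sqrt x + \<theta>)\<bar>"
    using assms x by (simp add: abs_mult)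
  also have "\<dots> \<le> 2 / c * (real p * x ^ (p - 1) * sqrt x + x ^ p / (2 * sqrt x))"
    using assms x by (intro mult_right_le_one_le) auto
  also have "\<dots> = 2 / c * ((real p + 1/2) * (x ^ p / sqrt x))"
  proof -
    have "real p * x ^ (p - 1) * sqrt x = real p * (x ^ p / sqrt x)"
    proof (cases p)
      case (Suc n)
      have "x ^ Suc n / sqrt x = x ^ n * (x / sqrt x)" by simp
      then show ?thesis using Suc x by (simp add: real_div_sqrt)
    qed simp
    then show ?thesis using x by (simp add: field_simps)
  qed
  also have "\<dots> \<le> 2 / c * ((real p + 1) * (2 ^ p * T ^ p / sqrt T))"
  proof -
    have "x ^ p \<le> (2 * T) ^ p" using assms by (intro power_mono) auto
    then have "x ^ p / sqrt x \<le> 2 ^ p * T ^ p / sqrt T"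
      using assms by (intro frac_le) (auto simp: power_mult_distrib)
    then show ?thesis using assms x by (intro mult_left_mono mult_mono) auto
  qed
  finally show ?thesis by simp
qed

lemma integral_power_cos_sqrt_bound:
  fixes c T \<theta> :: real assumes "c > 0" "T > 0"
  shows "\<bar>integral {T..2*T} (\<lambda>x. x ^ p * cos (c * sqrt x + \<theta>))\<bar> \<le> 2 ^ (p + 3) * (real p + 2) * T ^ p * sqrt T / c"
proof -
  \<comment> \<open>integration by parts against \<open>d/dx sin (c sqrt x + \<theta>) = c / (2 sqrt x) * cos (c sqrt x + \<theta>)\<close>\<close>
  define F where "F x = 2 / c * (x ^ p * sqrt x) * sin (c * sqrt x + \<theta>)" for x
  define h where "h x = 2 / c * (real p * x ^ (p - 1) * sqrt x + x ^ p / (2 * sqrt x)) * sin (c * sqrt x + \<theta>)" for x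
  define g where "g x = x ^ p * cos (c * sqrt x + \<theta>)" for x
  have FTC: "((\<lambda>x. g x + h x) has_integral (F (2*T) - F T)) {T..2*T}"
  proof (rule fundamental_theorem_of_calculus)
    fix x assume "x \<in> {T..2*T}"
    then have "x > 0" using assms by simp
    from has_real_derivative_power_sqrt_sin[OF this assms(1), of p \<theta>]
    show "(F has_vector_derivative g x + h x) (at x within {T..2*T})"
      unfolding F_def g_def h_def
      by (simp add: has_real_derivative_iff_has_vector_derivative[symmetric] has_field_derivative_at_within)
  qed (use assms in simp)
  have "g integrable_on {T..2*T}" "h integrable_on {T..2*T}"
    unfolding g_def h_def using assms
    by (auto intro!: integrable_continuous_interval continuous_intros)
  then have "F (2*T) - F T = integral {T..2*T} g + integral {T..2*T} h"
    using has_integral_unique[OF FTC has_integral_add[OF integrable_integral integrable_integral]] by blast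
  then have "\<bar>integral {T..2*T} g\<bar> \<le> \<bar>F (2*T)\<bar> + \<bar>F T\<bar> + norm (integral {T..2*T} h)"
    by simp
  also have "\<dots> \<le> 2 / c * (2^p * T^p * (2 * sqrt T)) + 2 / c * (2^p * T^p * (2 * sqrt T))
     + 2 / c * ((real p + 1) * (2^p * T^p) / sqrt T) * T"
  proof (intro add_mono)
    have "\<bar>F x\<bar> \<le> 2 / c * (2^p * T^p * (2 * sqrt T))" if "x \<in> {T..2*T}" for x
    proof -
      have x: "0 \<le> x" "x \<le> 2*T" using that assms by auto
      have "\<bar>F x\<bar> = 2 / c * (x ^ p * sqrt x) * \<bar>sin (c * sqrt x + \<theta>)\<bar>"
        unfolding F_def using assms x by (simp add: abs_mult)
      also have "\<dots> \<le> 2 / c * (x ^ p * sqrt x)"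
        using assms x by (intro mult_right_le_one_le) auto
      also have "\<dots> \<le> 2 / c * ((2 * T) ^ p * sqrt (4 * T))"
        using assms x by (intro mult_left_mono mult_mono power_mono real_sqrt_le_mono) auto
      finally show ?thesis by (simp add: power_mult_distrib real_sqrt_mult)
    qed
    then show "\<bar>F (2*T)\<bar> \<le> 2 / c * (2^p * T^p * (2 * sqrt T))" "\<bar>F T\<bar> \<le> 2 / c * (2^p * T^p * (2 * sqrt T))"
      using assms by auto
    have "norm (h x) \<le> 2 / c * ((real p + 1) * (2^p * T^p) / sqrt T)" if "x \<in> cbox T (2*T)" for x
      unfolding h_def real_norm_def
      by (rule abs_amplitude_deriv_sin_le) (use that assms in \<open>auto simp: cbox_interval\<close>)
    from has_integral_bound[OF _ integrable_integral[OF \<open>h integrable_on {T..2*T}\<close>[folded cbox_interval]] this]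
    show "norm (integral {T..2*T} h) \<le> 2 / c * ((real p + 1) * (2^p * T^p) / sqrt T) * T"
      using assms by (simp add: cbox_interval)
  qed
  also have "\<dots> = 2 / c * 2 ^ p * T ^ p * (4 * sqrt T + (real p + 1) * (T / sqrt T))"
    using assms by (simp add: field_simps)
  also have "\<dots> = 2 / c * 2 ^ p * T ^ p * sqrt T * (real p + 5)"
    using assms by (simp add: real_div_sqrt algebra_simps)
  also have "\<dots> \<le> 2 ^ (p + 3) * (real p + 2) * T ^ p * sqrt T / c"
    using assms by (simp add: field_simps power_add)
  finally show ?thesis unfolding g_def .
qed

lemma prod_powr_eighth_le_sum_sqrt:
  fixes a b c d :: real assumes "0 \<le> a" "0 \<le> b" "0 \<le> c" "0 \<le> d"
  shows "(a * b * c * d) powr (1/8) \<le> sqrt a + sqrt b + sqrt c + sqrt d"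
proof -
  define S where "S = sqrt a + sqrt b + sqrt c + sqrt d"
  have "S \<ge> 0" "sqrt a \<le> S" "sqrt b \<le> S" "sqrt c \<le> S" "sqrt d \<le> S"
    unfolding S_def using assms by auto
  then have "sqrt a * sqrt b * sqrt c * sqrt d \<le> S * S * S * S"
    using assms by (intro mult_mono) auto
  have "(a * b * c * d) powr (1/8) = (sqrt a * sqrt b * sqrt c * sqrt d) powr (1/4)"
    using assms by (simp add: powr_half_sqrt[symmetric] powr_powr powr_mult)
  also have "\<dots> \<le> (S * S * S * S) powr (1/4)"
    using \<open>sqrt a * sqrt b * sqrt c * sqrt d \<le> S * S * S * S\<close> assms by (intro powr_mono2) auto
  also have "\<dots> = (S powr 4) powr (1/4)"
    using powr_realpow'[OF \<open>S \<ge> 0\<close>, of 4] by (simp add: power4_eq_xxxx)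
  also have "\<dots> = S"
    using \<open>S \<ge> 0\<close> by (subst powr_powr) simp
  finally show ?thesis unfolding S_def .
qed

lemma abs_sum4_le_mult_power4:
  fixes f :: "'a \<Rightarrow> 'a \<Rightarrow> 'a \<Rightarrow> 'a \<Rightarrow> real" and w :: "'a \<Rightarrow> real"
  assumes "\<And>n m k l. n \<in> A \<Longrightarrow> m \<in> A \<Longrightarrow> k \<in> A \<Longrightarrow> l \<in> A \<Longrightarrow>
    \<bar>f n m k l\<bar> \<le> B * (w n * w m * w k * w l)"
  shows "\<bar>\<Sum>n\<in>A. \<Sum>m\<in>A. \<Sum>k\<in>A. \<Sum>l\<in>A. f n m k l\<bar> \<le> B * (sum w A) ^ 4"
proof -
  have "\<bar>\<Sum>n\<in>A. \<Sum>m\<in>A. \<Sum>k\<in>A. \<Sum>l\<in>A. f n m k l\<bar>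
      \<le> (\<Sum>n\<in>A. \<Sum>m\<in>A. \<Sum>k\<in>A. \<Sum>l\<in>A. B * (w n * w m * w k * w l))"
    using assms by (intro order.trans[OF sum_abs] sum_mono) blast+
  also have "\<dots> = B * (sum w A) ^ 4"
    by (simp add: eval_nat_numeral sum_distrib_left sum_distrib_right mult_ac)
  finally show ?thesis .
qed

definition osc_integral :: "nat \<Rightarrow> real \<Rightarrow> nat \<Rightarrow> nat \<Rightarrow> nat \<Rightarrow> nat \<Rightarrow> real" where
  "osc_integral p T n m k l = integral {T..2*T} (\<lambda>x. x ^ p *
     cos (4 * pi * (sqrt (real n) + sqrt (real m) + sqrt (real k) + sqrt (real l)) * sqrt x - pi))"

lemma integral_S4_eq:
  "integral {T..2*T} (S4 \<kappa> a T) = (1/8) *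
     (\<Sum>n=1..nat \<lfloor>T powr (3/4)\<rfloor>. \<Sum>m=1..nat \<lfloor>T powr (3/4)\<rfloor>. \<Sum>k=1..nat \<lfloor>T powr (3/4)\<rfloor>. \<Sum>l=1..nat \<lfloor>T powr (3/4)\<rfloor>.
        g4 \<kappa> a (T powr (3/4)) n m k l * osc_integral (2 * \<kappa> - 1) T n m k l)"
proof -
  have summand: "((\<lambda>x. g * x ^ p * cos (c * sqrt x - pi)) has_integral
      g * integral {T..2*T} (\<lambda>x. x ^ p * cos (c * sqrt x - pi))) {T..2*T}" for g c :: real and p
    unfolding mult.assoc
    by (intro has_integral_mult_right integrable_integral integrable_continuous_interval continuous_intros)
  show ?thesis
    unfolding S4_def Let_def osc_integral_def
    by (intro integral_unique has_integral_mult_right has_integral_sum finite_atLeastAtMost ballI summand)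
qed

lemma abs_osc_integral_le:
  assumes "1 \<le> n" "1 \<le> m" "1 \<le> k" "1 \<le> l" "T > 0"
  shows "\<bar>osc_integral p T n m k l\<bar>
    \<le> 2 ^ (p + 3) * (real p + 2) * T ^ p * sqrt T / (4 * pi * real (n * m * k * l) powr (1/8))"
proof -
  define s where "s = sqrt (real n) + sqrt (real m) + sqrt (real k) + sqrt (real l)"
  have P: "0 < real (n * m * k * l) powr (1/8)" "real (n * m * k * l) powr (1/8) \<le> s"
    unfolding s_def using assms by (auto intro: prod_powr_eighth_le_sum_sqrt)
  then have "s > 0" by linarith
  have "\<bar>osc_integral p T n m k l\<bar> \<le> 2 ^ (p + 3) * (real p + 2) * T ^ p * sqrt T / (4 * pi * s)"
    using integral_power_cos_sqrt_bound[of "4 * pi * s" T p "- pi"] \<open>s > 0\<close> assms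
    unfolding osc_integral_def s_def by (simp add: mult.assoc)
  also have "\<dots> \<le> 2 ^ (p + 3) * (real p + 2) * T ^ p * sqrt T / (4 * pi * real (n * m * k * l) powr (1/8))"
    using P \<open>s > 0\<close> assms by (intro divide_left_mono mult_left_mono mult_pos_pos) auto
  finally show ?thesis .
qed

text \<open>The exponent \<open>-7/8 = (\<kappa>-1)/2 - (\<kappa>/2 + 1/4) - 1/8\<close> combines Deligne's bound, the
  normalisation in \<open>g4\<close> and the saving \<open>n^(-1/8)\<close> from the oscillation.\<close>
definition divisor_weight :: "nat \<Rightarrow> real" where
  "divisor_weight n = real (divisor_count n) * real n powr (-7/8)"

lemma abs_div_powr_le_divisor_weight:
  assumes "\<bar>a n\<bar> \<le> C * real n powr ((real \<kappa> - 1) / 2) * real (divisor_count n)" "n \<ge> 1"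
  shows "\<bar>a n\<bar> / real n powr (real \<kappa> / 2 + 3/8) \<le> C * divisor_weight n"
proof -
  have "\<bar>a n\<bar> / real n powr (real \<kappa> / 2 + 3/8)
      \<le> C * real n powr ((real \<kappa> - 1) / 2) * real (divisor_count n) / real n powr (real \<kappa> / 2 + 3/8)"
    using assms by (intro divide_right_mono) auto
  also have "\<dots> = C * real (divisor_count n) * real n powr ((real \<kappa> - 1) / 2 - (real \<kappa> / 2 + 3/8))"
    by (simp add: powr_diff)
  also have "\<dots> = C * divisor_weight n"
    by (simp add: divisor_weight_def field_simps)
  finally show ?thesis .
qed

lemma abs_g4_mult_osc_integral_le:
  assumes deligne: "\<forall>n\<ge>1. \<bar>a n\<bar> \<le> C * real n powr ((real \<kappa> - 1) / 2) * real (divisor_count n)"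
    and "n \<in> {1..N}" "m \<in> {1..N}" "k \<in> {1..N}" "l \<in> {1..N}" "real N \<le> y" "T > 0"
  shows "\<bar>g4 \<kappa> a y n m k l * osc_integral p T n m k l\<bar>
    \<le> 2 ^ (p + 3) * (real p + 2) * T ^ p * sqrt T / (4 * pi) * C ^ 4 *
       (divisor_weight n * divisor_weight m * divisor_weight k * divisor_weight l)"
proof -
  define B where "B = 2 ^ (p + 3) * (real p + 2) * T ^ p * sqrt T / (4 * pi)"
  define q where "q n = \<bar>a n\<bar> / real n powr (real \<kappa> / 2 + 3/8)" for n
  have B: "B \<ge> 0" unfolding B_def using assms by simp
  have pos: "real n > 0" "real m > 0" "real k > 0" "real l > 0" using assms by auto
  have "real n \<le> y" "real m \<le> y" "real k \<le> y" "real l \<le> y"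
    using assms by auto
  then have "\<bar>g4 \<kappa> a y n m k l * osc_integral p T n m k l\<bar>
      = \<bar>a n\<bar> * \<bar>a m\<bar> * \<bar>a k\<bar> * \<bar>a l\<bar> / real (n * m * k * l) powr (real \<kappa> / 2 + 1/4) *
        \<bar>osc_integral p T n m k l\<bar>"
    unfolding g4_def by (simp add: abs_mult abs_divide)
  also have "\<dots> \<le> \<bar>a n\<bar> * \<bar>a m\<bar> * \<bar>a k\<bar> * \<bar>a l\<bar> / real (n * m * k * l) powr (real \<kappa> / 2 + 1/4) *
      (B / real (n * m * k * l) powr (1/8))"
    using abs_osc_integral_le[of n m k l T p] assms unfolding B_def
    by (intro mult_left_mono) (auto simp: field_simps)
  also have "\<dots> = B * (\<bar>a n\<bar> * \<bar>a m\<bar> * \<bar>a k\<bar> * \<bar>a l\<bar>) / real (n * m * k * l) powr (real \<kappa> / 2 + 3/8)"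
  proof -
    have "real \<kappa> / 2 + 3/8 = (real \<kappa> / 2 + 1/4) + 1/8" by simp
    then show ?thesis by (simp only: powr_add) simp
  qed
  also have "\<dots> = B * (q n * q m * q k * q l)"
    using pos by (simp add: q_def powr_mult)
  also have "\<dots> \<le> B * ((C * divisor_weight n) * (C * divisor_weight m) * (C * divisor_weight k) * (C * divisor_weight l))"
  proof -
    define W where "W i = C * divisor_weight i" for i
    have q: "0 \<le> q i" "q i \<le> W i" if "i \<ge> 1" for i
      using deligne that unfolding q_def W_def by (auto intro: abs_div_powr_le_divisor_weight)
    have "q n * q m * q k * q l \<le> W n * W m * W k * W l"
      using assms q order.trans[OF q] by (intro mult_mono mult_nonneg_nonneg) auto
    then show ?thesis unfolding W_def using B by (rule mult_left_mono)
  qed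
  finally show ?thesis
    unfolding B_def by (simp add: eval_nat_numeral mult_ac)
qed

lemma abs_integral_S4_le:
  assumes deligne: "\<forall>n\<ge>1. \<bar>a n\<bar> \<le> C * real n powr ((real \<kappa> - 1) / 2) * real (divisor_count n)"
    and "\<kappa> \<ge> 1" "T > 0"
  shows "\<bar>integral {T..2*T} (S4 \<kappa> a T)\<bar>
    \<le> 2 ^ (2 * \<kappa> + 2) * (2 * real \<kappa> + 1) * T ^ (2 * \<kappa> - 1) * sqrt T / (32 * pi) * C ^ 4 *
       (\<Sum>n=1..nat \<lfloor>T powr (3/4)\<rfloor>. divisor_weight n) ^ 4"
proof -
  define N where "N = nat \<lfloor>T powr (3/4)\<rfloor>"
  define B where "B = 2 ^ (2 * \<kappa> + 2) * (2 * real \<kappa> + 1) * T ^ (2 * \<kappa> - 1) * sqrt T / (4 * pi) * C ^ 4"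
  have "real N \<le> T powr (3/4)"
    unfolding N_def by simp
  then have "\<bar>g4 \<kappa> a (T powr (3/4)) n m k l * osc_integral (2 * \<kappa> - 1) T n m k l\<bar>
      \<le> B * (divisor_weight n * divisor_weight m * divisor_weight k * divisor_weight l)"
    if "n \<in> {1..N}" "m \<in> {1..N}" "k \<in> {1..N}" "l \<in> {1..N}" for n m k l
    using abs_g4_mult_osc_integral_le[OF deligne that _ \<open>T > 0\<close>, of "T powr (3/4)" "2 * \<kappa> - 1"] \<open>\<kappa> \<ge> 1\<close>
    unfolding B_def by (simp add: of_nat_diff add.commute)
  then have "\<bar>\<Sum>n=1..N. \<Sum>m=1..N. \<Sum>k=1..N. \<Sum>l=1..N.
      g4 \<kappa> a (T powr (3/4)) n m k l * osc_integral (2 * \<kappa> - 1) T n m k l\<bar>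
      \<le> B * (\<Sum>n=1..N. divisor_weight n) ^ 4"
    by (rule abs_sum4_le_mult_power4)
  then show ?thesis
    unfolding integral_S4_eq N_def[symmetric] B_def by (simp add: abs_mult mult_ac)
qed

lemma sum_divisor_weight_le:
  assumes "1 \<le> y" "y \<le> T" "\<epsilon> > 0"
  shows "(\<Sum>n=1..nat \<lfloor>y\<rfloor>. divisor_weight n) \<le> 8 * (1 + 4 / \<epsilon>) * y powr (1/8) * T powr (\<epsilon>/4)"
proof -
  define N where "N = nat \<lfloor>y\<rfloor>"
  have N: "N \<ge> 1" "real N \<le> y" unfolding N_def using assms by (auto simp: le_nat_iff)
  have "harm N \<le> 1 + ln (real N)"
    using N by (intro harm_le_one_plus_ln) auto
  also have "ln (real N) \<le> ln T"
    using N assms by simp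
  also have "ln T \<le> 4 / \<epsilon> * T powr (\<epsilon>/4)"
    using ln_powr_bound[of T "\<epsilon>/4"] assms by (simp add: mult.commute)
  also have "1 \<le> T powr (\<epsilon>/4)"
    using assms by (intro ge_one_powr_ge_zero) auto
  finally have harm_le: "harm N \<le> (1 + 4 / \<epsilon>) * T powr (\<epsilon>/4)"
    by (simp add: algebra_simps)
  have "(\<Sum>n=1..N. divisor_weight n) \<le> 8 * real N powr (1/8) * harm N"
    using sum_divisor_count_powr_le[of "1/8" N] by (simp add: divisor_weight_def)
  also have "\<dots> \<le> 8 * y powr (1/8) * ((1 + 4 / \<epsilon>) * T powr (\<epsilon>/4))"
    using N harm_le harm_nonneg[of N] by (intro mult_mono powr_mono2 mult_left_mono) auto
  finally show ?thesis unfolding N_def by (simp only: mult_ac)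
qed

theorem mainTheorem5:
  fixes \<kappa> :: nat and a :: "nat \<Rightarrow> real"
  assumes "even \<kappa>" and "\<kappa> \<ge> 12"
    and "is_cusp_form_coeffs \<kappa> a"
    and "\<exists>C. \<forall>n\<ge>1. \<bar>a n\<bar> \<le> C * real n powr ((real \<kappa> - 1) / 2) * real (divisor_count n)"
  shows "\<forall>\<epsilon>>0. \<exists>C. \<forall>T\<ge>10.
           \<bar>integral {T..2 * T} (S4 \<kappa> a T)\<bar>
             \<le> C * T powr (2 * real \<kappa> - 1 / 2 + \<epsilon>) * (T powr (3 / 4)) powr (1 / 2)"
proof (intro allI impI)
  fix \<epsilon> :: real assume "\<epsilon> > 0"
  obtain C where deligne: "\<forall>n\<ge>1. \<bar>a n\<bar> \<le> C * real n powr ((real \<kappa> - 1) / 2) * real (divisor_count n)"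
    using assms(4) by blast
  define A where "A = 2 ^ (2 * \<kappa> + 2) * (2 * real \<kappa> + 1) / (32 * pi) * C ^ 4"
  show "\<exists>K. \<forall>T\<ge>10. \<bar>integral {T..2 * T} (S4 \<kappa> a T)\<bar>
      \<le> K * T powr (2 * real \<kappa> - 1 / 2 + \<epsilon>) * (T powr (3 / 4)) powr (1 / 2)"
  proof (intro exI allI impI)
    fix T :: real assume "T \<ge> 10"
    define y where "y = T powr (3/4)"
    have y: "1 \<le> y" "y \<le> T"
      unfolding y_def using \<open>T \<ge> 10\<close> powr_mono[of "3/4" 1 T] by (auto intro: ge_one_powr_ge_zero)
    have "\<bar>integral {T..2*T} (S4 \<kappa> a T)\<bar> \<le> A * T ^ (2 * \<kappa> - 1) * sqrt T * (\<Sum>n=1..nat \<lfloor>y\<rfloor>. divisor_weight n) ^ 4"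
      using abs_integral_S4_le[OF deligne] assms(2) \<open>T \<ge> 10\<close> unfolding A_def y_def by (simp add: mult_ac)
    also have "\<dots> \<le> A * T ^ (2 * \<kappa> - 1) * sqrt T * (8 * (1 + 4 / \<epsilon>) * y powr (1/8) * T powr (\<epsilon>/4)) ^ 4"
      using sum_divisor_weight_le[OF y \<open>\<epsilon> > 0\<close>] \<open>T \<ge> 10\<close>
      by (intro mult_left_mono power_mono sum_nonneg) (auto simp: A_def divisor_weight_def)
    also have "\<dots> = A * (8 * (1 + 4 / \<epsilon>)) ^ 4 * (T ^ (2 * \<kappa> - 1) * sqrt T * T powr \<epsilon>) * y powr (1/2)"
      using y \<open>T \<ge> 10\<close> by (simp add: power_mult_distrib powr_power)
    also have "T ^ (2 * \<kappa> - 1) * sqrt T * T powr \<epsilon> = T powr (2 * real \<kappa> - 1 / 2 + \<epsilon>)"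
      using assms(2) \<open>T \<ge> 10\<close>
      by (simp add: powr_realpow [symmetric] powr_half_sqrt [symmetric] powr_add [symmetric] of_nat_diff)
    finally show "\<bar>integral {T..2 * T} (S4 \<kappa> a T)\<bar>
        \<le> A * (8 * (1 + 4 / \<epsilon>)) ^ 4 * T powr (2 * real \<kappa> - 1 / 2 + \<epsilon>) * (T powr (3 / 4)) powr (1 / 2)"
      unfolding y_def by (simp only: mult_ac)
  qed
qed

end
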